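(* Let $\mu^K$ be the probability measure on $\mathbb N_0^{\overline{\mathbb V}}$ defined by $\int\mu^K(d\underline k)\varphi(\underline k)=\int\nu^O(d\underline s)\sum_{\underline k}\varphi(\underline k)\prod_{i\in\overline{\mathbb V}}\left(\frac{s_i}{s_i+1}\right)^{k_i}\frac1{s_i+1}$ for test functions $\varphi$ (a product of geometric random variables with random means $s_i$, where $\underline s$ is distributed according to $\nu^O$). Then $\mu^K$ is invariant for the discrete KMP process with generator $L^K$ and boundary conditions $T_{\partial\mathbb V}$.
   Context: Graph: finite oriented graph $(\overline{\mathbb V},\overline E)$, $\overline{\mathbb V}=\mathbb V\cup\partial\mathbb V$ (internal/boundary vertices), $\overline E=E\cup\partial E$ with $E$ the edges inside $\mathbb V$ and $\partial E$ the edges $ij$ with $i\in\mathbb V$, $j\in\partial\mathbb V$; no edges between boundary vertices; at most one edge per pair. Fixed boundary temperatures $T_j>0$, $j\in\partial\mathbb V$. $\mathbb N_0=\{0,1,\dots\}$. Opinion process: Markov process on $\mathbb R_+^{\overline{\mathbb V}}$ with $O_j\equiv T_j$ for $j\in\partial\mathbb V$ and generator $L^Of(O)=\sum_{ij\in\overline E}\int_0^1dv\,[f(H^O_{ij;v}O)-f(O)]$, $(H^O_{ij;v}O)_\ell=vO_i+(1-v)O_j$ for $\ell\in\{i,j\}\cap\mathbb V$, $=O_\ell$ otherwise. $\nu^O$ denotes its unique invariant probability measure. Discrete KMP process with boundary conditions $T_{\partial\mathbb V}$: Markov process on $\mathbb N_0^{\overline{\mathbb V}}$ with generator $L^Kf(\underline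 k)=\sum_{ij\in\overline E}\frac1{k_i+k_j+1}\sum_{h=0}^{k_i+k_j}\Big(\mathbf 1\{j\in\mathbb V\}[f(H_{ij;h}\underline k)-f(\underline k)]+\mathbf 1\{j\in\partial\mathbb V\}\sum_{b\ge0}\left(\frac{T_j}{T_j+1}\right)^b\frac1{T_j+1}[f(H_{ij;h,b}\underline k)-f(\underline k)]\Big)$, where $(H_{ij;h}\underline k)_i=h$, $(H_{ij;h}\underline k)_j=k_i+k_j-h$, other coordinates unchanged; and $(H_{ij;h,b}\underline k)_j=b$, $(H_{ij;h,b}\underline k)_\ell=(H_{ij;h}\underline k)_\ell$ for $\ell\neq j$. *)

theory Defs
  imports "HOL-Probability.Probability"
begin

(* Vertices: a finite type 'v = \<overline>V; internal vertices V :: 'v set, boundary = - V.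
   Oriented edges Eb = E \<union> \<partial>E as pairs (i,j) with i \<in> V. *)

definition HO :: "'v set \<Rightarrow> 'v \<Rightarrow> 'v \<Rightarrow> real \<Rightarrow> ('v \<Rightarrow> real) \<Rightarrow> ('v \<Rightarrow> real)" where
  "HO V i j v x = (\<lambda>l. if l \<in> {i, j} \<inter> V then v * x i + (1 - v) * x j else x l)"

definition LO :: "'v set \<Rightarrow> ('v \<times> 'v) set \<Rightarrow> (('v \<Rightarrow> real) \<Rightarrow> real) \<Rightarrow> ('v \<Rightarrow> real) \<Rightarrow> real" where
  "LO V Eb f x = (\<Sum>(i, j)\<in>Eb. (LINT v:{0..1}|lborel. f (HO V i j v x) - f x))"

abbreviation opinion_space :: "('v \<Rightarrow> real) measure" where
  "opinion_space \<equiv> Pi\<^sub>M UNIV (\<lambda>_. borel)"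

definition opinion_invariant ::
  "'v set \<Rightarrow> ('v \<times> 'v) set \<Rightarrow> ('v \<Rightarrow> real) \<Rightarrow> ('v \<Rightarrow> real) measure \<Rightarrow> bool" where
  "opinion_invariant V Eb T \<nu> \<longleftrightarrow>
     prob_space \<nu> \<and> sets \<nu> = sets opinion_space \<and>
     (AE s in \<nu>. (\<forall>i. 0 \<le> s i) \<and> (\<forall>j. j \<notin> V \<longrightarrow> s j = T j)) \<and>
     (\<forall>f. f \<in> borel_measurable opinion_space \<longrightarrow> (\<exists>C. \<forall>x. \<bar>f x\<bar> \<le> C) \<longrightarrow>
          integral\<^sup>L \<nu> (LO V Eb f) = 0)"

definition Hk :: "'v \<Rightarrow> 'v \<Rightarrow> nat \<Rightarrow> ('v \<Rightarrow> nat) \<Rightarrow> ('v \<Rightarrow> nat)" where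
  "Hk i j h k = k(i := h, j := k i + k j - h)"

definition Hkb :: "'v \<Rightarrow> 'v \<Rightarrow> nat \<Rightarrow> nat \<Rightarrow> ('v \<Rightarrow> nat) \<Rightarrow> ('v \<Rightarrow> nat)" where
  "Hkb i j h b k = (Hk i j h k)(j := b)"

definition LK :: "'v set \<Rightarrow> ('v \<times> 'v) set \<Rightarrow> ('v \<Rightarrow> real) \<Rightarrow> (('v \<Rightarrow> nat) \<Rightarrow> real) \<Rightarrow> ('v \<Rightarrow> nat) \<Rightarrow> real" where
  "LK V Eb T f k = (\<Sum>(i, j)\<in>Eb. (1 / real (k i + k j + 1)) *
      (\<Sum>h = 0..k i + k j.
         (if j \<in> V then f (Hk i j h k) - f k
          else (\<Sum>b. (T j / (T j + 1)) ^ b * (1 / (T j + 1)) * (f (Hkb i j h b k) - f k)))))"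

definition kmp_invariant ::
  "'v set \<Rightarrow> ('v \<times> 'v) set \<Rightarrow> ('v \<Rightarrow> real) \<Rightarrow> ('v \<Rightarrow> nat) measure \<Rightarrow> bool" where
  "kmp_invariant V Eb T \<mu> \<longleftrightarrow>
     (\<forall>f :: ('v \<Rightarrow> nat) \<Rightarrow> real. (\<exists>C. \<forall>k. \<bar>f k\<bar> \<le> C) \<longrightarrow>
        integrable \<mu> (LK V Eb T f) \<and> integral\<^sup>L \<mu> (LK V Eb T f) = 0)"

definition muK :: "('v::finite \<Rightarrow> real) measure \<Rightarrow> ('v \<Rightarrow> nat) measure" where
  "muK \<nu> = density (count_space UNIV)
     (\<lambda>k. \<integral>\<^sup>+ s. ennreal (\<Prod>i\<in>UNIV. (s i / (s i + 1)) ^ (k i) * (1 / (s i + 1))) \<partial>\<nu>)"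

end

theory Submission
  imports Defs
begin

(* Write G(s) for the product of geometric laws with means s_i, P_s(k) = (s/(s+1))^k / (s+1).
   If two independent geometric variables with means a and b are added and their sum N is split
   uniformly at random, the result has the law of two independent geometric variables with the
   common mean w = v a + (1 - v) b, mixed over v uniform in [0,1]: both give each pair (h, N - h)
   the weight (1/(N+1)) sum_{m<=N} P_a(m) P_b(N - m) = int_0^1 (w/(w+1))^N / (w+1)^2 dv.
   Resampling a boundary site from Geom(T_j) restores its mean T_j = s_j. Hence a KMP move on the
   edge ij maps G(s) to the mixture over v of G(H^O_{ij;v} s), that is
   E_{G(s)}[L^K f] = L^O Phi_f (s) with Phi_f(s) = E_{G(s)} f bounded and measurable. Since mu^K is
   the mixture of G(s) over s ~ nu, integrating this identity against the invariant measure nu of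
   the opinion process gives mu^K(L^K f) = nu(L^O Phi_f) = 0. *)

lemma prod_UNIV_pair_split:
  fixes F :: "'v::finite \<Rightarrow> 'a::comm_monoid_mult"
  assumes "i \<noteq> j"
  shows "(\<Prod>l\<in>UNIV. F l) = F i * F j * (\<Prod>l\<in>-{i, j}. F l)"
proof -
  have "UNIV = insert i (insert j (-{i, j}))" by auto
  then have "(\<Prod>l\<in>UNIV. F l) = (\<Prod>l\<in>insert i (insert j (-{i, j})). F l)" by simp
  then show ?thesis using assms by (simp add: mult.assoc)
qed

lemma integrable_measure_pmf_bounded:
  fixes f :: "'a \<Rightarrow> real"
  assumes "\<And>x. \<bar>f x\<bar> \<le> C"
  shows "integrable (measure_pmf p) f"
  by (rule measure_pmf.integrable_const_bound[where B = C]) (use assms in auto)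

lemma abs_expectation_pmf_le:
  fixes f :: "'a \<Rightarrow> real"
  assumes "\<And>x. \<bar>f x\<bar> \<le> C"
  shows "\<bar>measure_pmf.expectation p f\<bar> \<le> C"
proof -
  have "0 \<le> C"
    using assms[of undefined] abs_ge_zero order_trans by blast
  have "\<bar>measure_pmf.expectation p f\<bar> \<le> measure_pmf.expectation p (\<lambda>x. \<bar>f x\<bar>)"
    by (rule integral_abs_bound)
  also have "\<dots> \<le> measure_pmf.expectation p (\<lambda>_. C)"
    using assms \<open>0 \<le> C\<close> by (intro integral_mono integrable_measure_pmf_bounded[of _ C]) auto
  finally show ?thesis by simp
qed

lemma expectation_bind_pmf:
  fixes f :: "'b \<Rightarrow> real"
  assumes "\<And>x. \<bar>f x\<bar> \<le> C"
  shows "measure_pmf.expectation (M \<bind> N) f = measure_pmf.expectation M (\<lambda>x. measure_pmf.expectation (N x) f)"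
  unfolding measure_pmf_bind
  by (rule integral_bind[where K = "count_space UNIV" and B = C and B' = 1])
     (use assms in \<open>auto simp: measure_pmf_in_subprob_algebra\<close>)

lemma expectation_pmf_nat_suminf:
  fixes g :: "nat \<Rightarrow> real"
  assumes "\<And>b. \<bar>g b\<bar> \<le> C"
  shows "measure_pmf.expectation p g = (\<Sum>b. pmf p b * g b)"
proof -
  have "integrable (density (count_space UNIV) (pmf p)) g"
    using integrable_measure_pmf_bounded[OF assms] unfolding measure_pmf_eq_density .
  then have "integrable (count_space UNIV) (\<lambda>b. pmf p b * g b)"
    by (subst (asm) integrable_density) auto
  moreover have "measure_pmf.expectation p g = integral\<^sup>L (count_space UNIV) (\<lambda>b. pmf p b * g b)"
    unfolding measure_pmf_eq_density by (subst integral_density) auto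
  ultimately show ?thesis
    by (simp add: integral_count_space_nat)
qed

lemma measure_pmf_measurable_subprob_algebra:
  fixes P :: "'a \<Rightarrow> 'b::countable pmf"
  assumes "\<And>k. (\<lambda>x. pmf (P x) k) \<in> borel_measurable M"
  shows "(\<lambda>x. measure_pmf (P x)) \<in> M \<rightarrow>\<^sub>M subprob_algebra (count_space UNIV)"
proof (rule measurable_subprob_algebra)
  fix A :: "'b set"
  interpret sigma_finite_measure "count_space (UNIV :: 'b set)"
    by (rule sigma_finite_measure_count_space)
  have "(\<lambda>(x, k). ennreal (pmf (P x) k) * indicator A k) \<in> borel_measurable (M \<Otimes>\<^sub>M count_space UNIV)"
    using measurable_compose_countable[where f = "\<lambda>k p. ennreal (pmf (P (fst p)) k) * indicator A k"
        and g = snd and M = "M \<Otimes>\<^sub>M count_space UNIV"] assms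
    by (simp add: case_prod_beta')
  then have "(\<lambda>x. \<integral>\<^sup>+ k. ennreal (pmf (P x) k) * indicator A k \<partial>count_space UNIV) \<in> borel_measurable M"
    by (rule borel_measurable_nn_integral)
  then show "(\<lambda>x. emeasure (measure_pmf (P x)) A) \<in> borel_measurable M"
    by (simp add: nn_integral_measure_pmf[symmetric])
qed (auto simp: subprob_space_measure_pmf)

definition unit_interval_measure :: "real measure" where
  "unit_interval_measure = restrict_space lborel {0..1}"

lemma space_unit_interval_measure: "space unit_interval_measure = {0..1}"
  unfolding unit_interval_measure_def by (simp add: space_restrict_space)

lemma prob_space_unit_interval_measure: "prob_space unit_interval_measure"
  unfolding unit_interval_measure_def by (rule prob_space_restrict_space) auto

lemma set_integral_unit_interval_measure:
  fixes g :: "real \<Rightarrow> real"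
  shows "(LINT v:{0..1}|lborel. g v) = integral\<^sup>L unit_interval_measure g"
  unfolding set_lebesgue_integral_def unit_interval_measure_def
  by (rule integral_restrict_space[symmetric]) simp

lemma nn_integral_unit_interval_measure:
  fixes f :: "real \<Rightarrow> real"
  assumes "(f has_integral I) {0..1}" and "\<And>v. v \<in> {0..1} \<Longrightarrow> 0 \<le> f v"
    and [measurable]: "f \<in> borel_measurable borel"
  shows "(\<integral>\<^sup>+ v. ennreal (f v) \<partial>unit_interval_measure) = ennreal I"
proof -
  have "(\<integral>\<^sup>+ v. ennreal (f v) \<partial>unit_interval_measure) = (\<integral>\<^sup>+ v. ennreal (f v) * indicator {0..1} v \<partial>lborel)"
    unfolding unit_interval_measure_def by (rule nn_integral_restrict_space) simp
  also have "\<dots> = (\<integral>\<^sup>+ v. ennreal (indicator {0..1} v * f v) \<partial>lborel)"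
    by (intro nn_integral_cong) (auto split: split_indicator)
  also have "\<dots> = ennreal I"
  proof (rule nn_integral_has_integral_lborel)
    have "((\<lambda>v. if v \<in> {0..1} then f v else 0) has_integral I) UNIV"
      using assms(1) has_integral_restrict_UNIV by blast
    then show "((\<lambda>v. indicator {0..1} v * f v) has_integral I) UNIV"
      by (rule has_integral_eq[rotated]) (auto split: split_indicator)
  qed (use assms(2) in \<open>auto split: split_indicator\<close>)
  finally show ?thesis .
qed

section \<open>Products of geometric laws\<close>

definition geom_weight :: "real \<Rightarrow> nat \<Rightarrow> real" where
  "geom_weight a m = (a / (a + 1)) ^ m * (1 / (a + 1))"

lemma geom_weight_nonneg: "0 \<le> a \<Longrightarrow> 0 \<le> geom_weight a m"
  unfolding geom_weight_def by simp

lemma geom_weight_mult_same_mean: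
  "geom_weight w c * geom_weight w d = (w / (w + 1)) ^ (c + d) * (1 / (w + 1)) ^ 2"
  unfolding geom_weight_def by (simp add: power2_eq_square power_add)

lemma borel_measurable_geom_weight[measurable]:
  "(\<lambda>x. geom_weight (f x) m) \<in> borel_measurable M" if [measurable]: "f \<in> borel_measurable M"
  unfolding geom_weight_def by measurable

lemma sum_geom_weight_convolution:
  fixes a b :: real
  assumes "0 \<le> a" "0 \<le> b" "a \<noteq> b"
  shows "(\<Sum>m\<le>N. geom_weight a m * geom_weight b (N - m))
       = ((a / (a + 1)) ^ Suc N - (b / (b + 1)) ^ Suc N) / (a - b)"
proof -
  define p q where "p = a / (a + 1)" and "q = b / (b + 1)"
  have pq: "p - q = (a - b) / ((a + 1) * (b + 1))"
    unfolding p_def q_def using assms by (simp add: field_simps)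
  have "(\<Sum>m\<le>N. geom_weight a m * geom_weight b (N - m))
      = (\<Sum>m<Suc N. q ^ (Suc N - Suc m) * p ^ m) / ((a + 1) * (b + 1))"
    unfolding geom_weight_def p_def q_def lessThan_Suc_atMost sum_divide_distrib
    by (intro sum.cong) (auto simp: algebra_simps)
  also have "\<dots> = (p ^ Suc N - q ^ Suc N) / (p - q) / ((a + 1) * (b + 1))"
  proof -
    have "p - q \<noteq> 0" using pq assms by simp
    then show ?thesis
      unfolding power_diff_sumr2[of p "Suc N" q] by simp
  qed
  also have "\<dots> = (p ^ Suc N - q ^ Suc N) / (a - b)"
  proof -
    have cancel: "X / (d / c) / c = X / d" if "c \<noteq> 0" for X d c :: real
      using that by simp
    show ?thesis unfolding pq by (rule cancel) (use assms in simp)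
  qed
  finally show ?thesis
    unfolding p_def q_def .
qed

lemma has_integral_interpolated_geom:
  fixes a b :: real
  assumes "0 \<le> a" "0 \<le> b"
  shows "((\<lambda>v. ((v * a + (1 - v) * b) / (v * a + (1 - v) * b + 1)) ^ N
                 * (1 / (v * a + (1 - v) * b + 1)) ^ 2)
          has_integral (\<Sum>m\<le>N. geom_weight a m * geom_weight b (N - m)) / (N + 1)) {0..1}"
proof (cases "a = b")
  case True
  define c where "c = (a / (a + 1)) ^ N * (1 / (a + 1)) ^ 2"
  have "(\<Sum>m\<le>N. geom_weight a m * geom_weight b (N - m)) = (N + 1) * c"
    using True by (simp add: c_def geom_weight_def power2_eq_square power_add[symmetric] mult_ac)
  then have "(\<Sum>m\<le>N. geom_weight a m * geom_weight b (N - m)) / (N + 1) = c"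
    by simp
  moreover have "v * a + (1 - v) * b = a" for v
    using True by (simp add: algebra_simps)
  ultimately show ?thesis
    using True has_integral_const_real[of c 0 1] by (simp add: c_def)
next
  case False
  define w where "w v = v * a + (1 - v) * b" for v
  define r where "r v = w v / (w v + 1)" for v
  define F where "F v = r v ^ Suc N / ((N + 1) * (a - b))" for v
  have "(F has_real_derivative (w v / (w v + 1)) ^ N * (1 / (w v + 1)) ^ 2) (at v within {0..1})"
    if "v \<in> {0..1}" for v
  proof -
    have "w v \<ge> 0"
      using that assms unfolding w_def by (auto intro!: add_nonneg_nonneg mult_nonneg_nonneg)
    then have "w v + 1 \<noteq> 0" by linarith
    then have "(r has_real_derivative (a - b) / (w v + 1) ^ 2) (at v within {0..1})"
      unfolding r_def w_def by (auto intro!: derivative_eq_intros simp: power2_eq_square field_simps)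
    then have "(F has_real_derivative (1 + real N) * ((a - b) / (w v + 1) ^ 2 * r v ^ N) / ((N + 1) * (a - b)))
        (at v within {0..1})"
      unfolding F_def by (intro DERIV_cdivide DERIV_power_Suc)
    moreover have "(1 + real N) * ((a - b) / (w v + 1) ^ 2 * r v ^ N) / ((N + 1) * (a - b))
        = (w v / (w v + 1)) ^ N * (1 / (w v + 1)) ^ 2"
      using False by (simp add: r_def power_one_over)
    ultimately show ?thesis by simp
  qed
  then have "((\<lambda>v. (w v / (w v + 1)) ^ N * (1 / (w v + 1)) ^ 2) has_integral F 1 - F 0) {0..1}"
    by (intro fundamental_theorem_of_calculus) (auto simp: has_real_derivative_iff_has_vector_derivative)
  moreover have "F 1 - F 0 = (\<Sum>m\<le>N. geom_weight a m * geom_weight b (N - m)) / (N + 1)"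
    unfolding sum_geom_weight_convolution[OF assms False] F_def r_def w_def
    by (simp add: diff_divide_distrib mult_ac)
  ultimately show ?thesis unfolding w_def by simp
qed

(* Negative means are clipped to 0 so that the success probability lies in (0, 1]. *)
definition geom_pmf :: "real \<Rightarrow> nat pmf" where
  "geom_pmf a = geometric_pmf (1 / (max 0 a + 1))"

lemma pmf_geom_pmf: "pmf (geom_pmf a) m = geom_weight (max 0 a) m"
proof -
  have "0 < 1 / (max 0 a + 1)" "1 / (max 0 a + 1) \<le> 1" by auto
  moreover have "1 - 1 / (max 0 a + 1) = max 0 a / (max 0 a + 1)"
    by (simp add: field_simps)
  ultimately show ?thesis
    unfolding geom_pmf_def geom_weight_def by simp
qed

definition prod_geom_pmf :: "('v::finite \<Rightarrow> real) \<Rightarrow> ('v \<Rightarrow> nat) pmf" where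
  "prod_geom_pmf s = Pi_pmf UNIV 0 (\<lambda>i. geom_pmf (s i))"

lemma pmf_prod_geom_pmf: "pmf (prod_geom_pmf s) k = (\<Prod>i\<in>UNIV. geom_weight (max 0 (s i)) (k i))"
  by (simp add: prod_geom_pmf_def pmf_Pi pmf_geom_pmf)

lemma pmf_prod_geom_pmf_pair:
  assumes "i \<noteq> j" and "\<forall>l. 0 \<le> s l"
  shows "pmf (prod_geom_pmf s) k
       = geom_weight (s i) (k i) * geom_weight (s j) (k j) * (\<Prod>l\<in>-{i, j}. geom_weight (s l) (k l))"
  unfolding pmf_prod_geom_pmf prod_UNIV_pair_split[OF assms(1)] using assms(2) by (simp add: max_def)

lemma prod_geom_pmf_resample:
  "prod_geom_pmf s \<bind> (\<lambda>k. map_pmf (\<lambda>b. k(j := b)) (geom_pmf c)) = prod_geom_pmf (s(j := c))"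
proof -
  define P where "P = Pi_pmf (-{j}) 0 (\<lambda>i. geom_pmf (s i))"
  have UNIV_eq: "UNIV = insert j (-{j})" by auto
  have "Pi_pmf (-{j}) 0 (\<lambda>i. geom_pmf ((s(j := c)) i)) = P"
    unfolding P_def by (rule Pi_pmf_cong) auto
  then have "prod_geom_pmf (s(j := c)) = geom_pmf c \<bind> (\<lambda>b. P \<bind> (\<lambda>k. return_pmf (k(j := b))))"
    unfolding prod_geom_pmf_def by (subst UNIV_eq, subst Pi_pmf_insert') auto
  also have "\<dots> = P \<bind> (\<lambda>k. map_pmf (\<lambda>b. k(j := b)) (geom_pmf c))"
    by (subst bind_commute_pmf) (simp add: map_pmf_def)
  also have "\<dots> = prod_geom_pmf s \<bind> (\<lambda>k. map_pmf (\<lambda>b. k(j := b)) (geom_pmf c))"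
  proof -
    have "prod_geom_pmf s = geom_pmf (s j) \<bind> (\<lambda>b. P \<bind> (\<lambda>k. return_pmf (k(j := b))))"
      unfolding prod_geom_pmf_def P_def by (subst UNIV_eq, rule Pi_pmf_insert') auto
    moreover have "fun_upd (k(j := x)) j = fun_upd k j" for k :: "'a \<Rightarrow> nat" and x
      by (rule ext) simp
    ultimately show ?thesis by (simp add: bind_assoc_pmf bind_return_pmf)
  qed
  finally show ?thesis ..
qed

lemma measurable_prod_geom_pmf:
  assumes "sets M = sets opinion_space"
  shows "(\<lambda>s. measure_pmf (prod_geom_pmf s)) \<in> M \<rightarrow>\<^sub>M subprob_algebra (count_space UNIV)"
proof -
  have "(\<lambda>s. measure_pmf (prod_geom_pmf s)) \<in> opinion_space \<rightarrow>\<^sub>M subprob_algebra (count_space UNIV)"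
    by (rule measure_pmf_measurable_subprob_algebra) (unfold pmf_prod_geom_pmf, measurable)
  then show ?thesis
    using assms by (simp cong: measurable_cong_sets)
qed

definition geom_expectation :: "(('v::finite \<Rightarrow> nat) \<Rightarrow> real) \<Rightarrow> ('v \<Rightarrow> real) \<Rightarrow> real" where
  "geom_expectation f s = measure_pmf.expectation (prod_geom_pmf s) f"

lemma borel_measurable_geom_expectation:
  "geom_expectation f \<in> borel_measurable opinion_space"
  unfolding geom_expectation_def[abs_def]
  by (rule measurable_compose[OF measurable_prod_geom_pmf[OF refl] integral_measurable_subprob_algebra]) simp

lemma abs_geom_expectation_le: "(\<And>k. \<bar>f k\<bar> \<le> C) \<Longrightarrow> \<bar>geom_expectation f s\<bar> \<le> C"
  unfolding geom_expectation_def by (rule abs_expectation_pmf_le)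

definition kmp_bulk_pmf :: "'v \<Rightarrow> 'v \<Rightarrow> ('v \<Rightarrow> nat) \<Rightarrow> ('v \<Rightarrow> nat) pmf" where
  "kmp_bulk_pmf i j k = map_pmf (\<lambda>h. Hk i j h k) (pmf_of_set {0..k i + k j})"

definition kmp_boundary_pmf :: "'v \<Rightarrow> 'v \<Rightarrow> real \<Rightarrow> ('v \<Rightarrow> nat) \<Rightarrow> ('v \<Rightarrow> nat) pmf" where
  "kmp_boundary_pmf i j t k = kmp_bulk_pmf i j k \<bind> (\<lambda>k'. map_pmf (\<lambda>b. k'(j := b)) (geom_pmf t))"

definition kmp_edge_pmf :: "'v set \<Rightarrow> ('v \<Rightarrow> real) \<Rightarrow> 'v \<Rightarrow> 'v \<Rightarrow> ('v \<Rightarrow> nat) \<Rightarrow> ('v \<Rightarrow> nat) pmf" where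
  "kmp_edge_pmf V T i j = (if j \<in> V then kmp_bulk_pmf i j else kmp_boundary_pmf i j (T j))"

lemma pmf_kmp_bulk_pmf:
  assumes "i \<noteq> j"
  shows "pmf (kmp_bulk_pmf i j k) k' =
    (if k i + k j = k' i + k' j \<and> (\<forall>l. l \<noteq> i \<longrightarrow> l \<noteq> j \<longrightarrow> k l = k' l)
     then 1 / (k' i + k' j + 1) else 0)"
proof -
  have Hk_eq: "Hk i j h k = k' \<longleftrightarrow> h = k' i \<and> k i + k j - h = k' j \<and> (\<forall>l. l \<noteq> i \<longrightarrow> l \<noteq> j \<longrightarrow> k l = k' l)" for h
    using assms unfolding Hk_def fun_eq_iff by auto
  have "{0..k i + k j} \<inter> (\<lambda>h. Hk i j h k) -` {k'} =
    (if k i + k j = k' i + k' j \<and> (\<forall>l. l \<noteq> i \<longrightarrow> l \<noteq> j \<longrightarrow> k l = k' l) then {k' i} else {})"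
    by (auto simp: set_eq_iff Hk_eq)
  then show ?thesis
    unfolding kmp_bulk_pmf_def pmf_map by (subst measure_pmf_of_set) auto
qed

lemma expectation_kmp_bulk_pmf:
  "measure_pmf.expectation (kmp_bulk_pmf i j k) f = (\<Sum>h = 0..k i + k j. f (Hk i j h k)) / (k i + k j + 1)"
  unfolding kmp_bulk_pmf_def by (simp add: integral_pmf_of_set)

lemma expectation_kmp_boundary_pmf:
  fixes f :: "('v \<Rightarrow> nat) \<Rightarrow> real"
  assumes f: "\<And>k. \<bar>f k\<bar> \<le> C" and "0 < t"
  shows "measure_pmf.expectation (kmp_boundary_pmf i j t k) f - f k =
    1 / (k i + k j + 1) *
      (\<Sum>h = 0..k i + k j. \<Sum>b. (t / (t + 1)) ^ b * (1 / (t + 1)) * (f (Hkb i j h b k) - f k))"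
proof -
  have resample: "(\<Sum>b. (t / (t + 1)) ^ b * (1 / (t + 1)) * (f (Hkb i j h b k) - f k))
      = measure_pmf.expectation (geom_pmf t) (\<lambda>b. f (Hkb i j h b k)) - f k" for h
  proof -
    have "pmf (geom_pmf t) b = (t / (t + 1)) ^ b * (1 / (t + 1))" for b
      unfolding pmf_geom_pmf geom_weight_def using \<open>0 < t\<close> by simp
    then have "(\<Sum>b. (t / (t + 1)) ^ b * (1 / (t + 1)) * (f (Hkb i j h b k) - f k))
        = (\<Sum>b. pmf (geom_pmf t) b * (f (Hkb i j h b k) - f k))"
      by simp
    also have "\<dots> = measure_pmf.expectation (geom_pmf t) (\<lambda>b. f (Hkb i j h b k) - f k)"
    proof (rule expectation_pmf_nat_suminf[symmetric, where C = "2 * C"])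
      show "\<bar>f (Hkb i j h b k) - f k\<bar> \<le> 2 * C" for b
        using abs_triangle_ineq4[of "f (Hkb i j h b k)" "f k"] f[of "Hkb i j h b k"] f[of k] by linarith
    qed
    also have "\<dots> = measure_pmf.expectation (geom_pmf t) (\<lambda>b. f (Hkb i j h b k)) - f k"
      by (subst Bochner_Integration.integral_diff) (auto intro!: integrable_measure_pmf_bounded[of _ C] f)
    finally show ?thesis .
  qed
  have "measure_pmf.expectation (kmp_boundary_pmf i j t k) f
     = (\<Sum>h = 0..k i + k j. measure_pmf.expectation (geom_pmf t) (\<lambda>b. f (Hkb i j h b k))) / (k i + k j + 1)"
    unfolding kmp_boundary_pmf_def expectation_bind_pmf[OF f] expectation_kmp_bulk_pmf Hkb_def by simp
  then show ?thesis
    unfolding resample by (simp add: sum_subtractf field_simps)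
qed

lemma LK_eq_sum_expectation:
  fixes f :: "('v \<Rightarrow> nat) \<Rightarrow> real"
  assumes f: "\<And>k. \<bar>f k\<bar> \<le> C" and T: "\<forall>j. j \<notin> V \<longrightarrow> 0 < T j"
  shows "LK V Eb T f k = (\<Sum>(i, j)\<in>Eb. measure_pmf.expectation (kmp_edge_pmf V T i j k) f - f k)"
  unfolding LK_def
proof (intro sum.cong refl, clarify)
  fix i j
  show "1 / real (k i + k j + 1) * (\<Sum>h = 0..k i + k j. if j \<in> V then f (Hk i j h k) - f k
          else (\<Sum>b. (T j / (T j + 1)) ^ b * (1 / (T j + 1)) * (f (Hkb i j h b k) - f k)))
      = measure_pmf.expectation (kmp_edge_pmf V T i j k) f - f k"
  proof (cases "j \<in> V")
    case True
    then show ?thesis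
      by (simp add: kmp_edge_pmf_def expectation_kmp_bulk_pmf sum_subtractf field_simps)
  next
    case False
    then show ?thesis
      using expectation_kmp_boundary_pmf[where f = f, OF f, of "T j" i j k] T by (simp add: kmp_edge_pmf_def)
  qed
qed

lemma abs_LK_le:
  fixes f :: "('v \<Rightarrow> nat) \<Rightarrow> real"
  assumes f: "\<And>k. \<bar>f k\<bar> \<le> C" and T: "\<forall>j. j \<notin> V \<longrightarrow> 0 < T j"
  shows "\<bar>LK V Eb T f k\<bar> \<le> real (card Eb) * (2 * C)"
proof -
  have "\<bar>LK V Eb T f k\<bar> \<le> (\<Sum>(i, j)\<in>Eb. \<bar>measure_pmf.expectation (kmp_edge_pmf V T i j k) f - f k\<bar>)"
    unfolding LK_eq_sum_expectation[where f = f, OF f T]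
    by (rule order_trans[OF sum_abs]) (simp add: case_prod_beta')
  also have "\<dots> \<le> (\<Sum>(i, j)\<in>Eb. 2 * C)"
  proof (intro sum_mono, clarify)
    fix i j
    show "\<bar>measure_pmf.expectation (kmp_edge_pmf V T i j k) f - f k\<bar> \<le> 2 * C"
      using abs_expectation_pmf_le[where f = f, OF f, of "kmp_edge_pmf V T i j k"] f[of k] by linarith
  qed
  finally show ?thesis by simp
qed

lemma measurable_HO[measurable]:
  "(\<lambda>p. HO V i j (snd p) (fst p)) \<in> opinion_space \<Otimes>\<^sub>M borel \<rightarrow>\<^sub>M opinion_space"
proof (rule measurable_PiM_single')
  fix l
  show "(\<lambda>p. HO V i j (snd p) (fst p) l) \<in> borel_measurable (opinion_space \<Otimes>\<^sub>M borel)"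
    unfolding HO_def by measurable
qed (auto simp: space_PiM)

lemma measurable_HO_unit_interval:
  "(\<lambda>v. HO V i j v s) \<in> unit_interval_measure \<rightarrow>\<^sub>M opinion_space"
proof -
  have "(\<lambda>v. (s, v)) \<in> borel \<rightarrow>\<^sub>M opinion_space \<Otimes>\<^sub>M borel"
    by (simp add: space_PiM)
  from measurable_compose[OF this measurable_HO] show ?thesis
    unfolding unit_interval_measure_def by (intro measurable_restrict_space1) simp
qed

lemma HO_nonneg:
  assumes "\<forall>l. 0 \<le> s l" and "v \<in> {0..1}"
  shows "0 \<le> HO V i j v s l"
  using assms unfolding HO_def by (auto intro!: add_nonneg_nonneg mult_nonneg_nonneg)

lemma measurable_prod_geom_pmf_HO:
  "(\<lambda>v. measure_pmf (prod_geom_pmf (HO V i j v s)))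
     \<in> unit_interval_measure \<rightarrow>\<^sub>M subprob_algebra (count_space UNIV)"
  by (rule measurable_compose[OF measurable_HO_unit_interval measurable_prod_geom_pmf[OF refl]])

lemma borel_measurable_LO:
  fixes g :: "('v::finite \<Rightarrow> real) \<Rightarrow> real"
  assumes [measurable]: "g \<in> borel_measurable opinion_space"
  shows "LO V Eb g \<in> borel_measurable opinion_space"
  unfolding LO_def[abs_def] set_lebesgue_integral_def
proof (rule borel_measurable_sum, clarify)
  fix i j
  have "sets (opinion_space \<Otimes>\<^sub>M lborel) = sets (opinion_space \<Otimes>\<^sub>M borel)"
    by (rule sets_pair_measure_cong) simp_all
  moreover have "(\<lambda>(x, v). indicator {0..1::real} v *\<^sub>R (g (HO V i j v x) - g x))
      \<in> borel_measurable (opinion_space \<Otimes>\<^sub>M borel)"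
    by measurable
  ultimately have "(\<lambda>(x, v). indicator {0..1::real} v *\<^sub>R (g (HO V i j v x) - g x))
      \<in> borel_measurable (opinion_space \<Otimes>\<^sub>M lborel)"
    by (simp cong: measurable_cong_sets)
  then show "(\<lambda>x. LINT v|lborel. indicator {0..1} v *\<^sub>R (g (HO V i j v x) - g x))
      \<in> borel_measurable opinion_space"
    by (rule lborel.borel_measurable_lebesgue_integral)
qed

section \<open>Duality between the two generators\<close>

lemma pmf_bind_prod_geom_kmp_bulk:
  assumes ij: "i \<noteq> j" and s: "\<forall>l. 0 \<le> s l"
  shows "pmf (prod_geom_pmf s \<bind> kmp_bulk_pmf i j) k' =
    (\<Sum>a\<le>k' i + k' j. geom_weight (s i) a * geom_weight (s j) (k' i + k' j - a)) / (k' i + k' j + 1)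
       * (\<Prod>l\<in>-{i, j}. geom_weight (s l) (k' l))"
proof -
  define N where "N = k' i + k' j"
  define e where "e a = k'(i := a, j := N - a)" for a
  have "inj_on e {0..N}"
    by (rule inj_onI) (metis e_def ij fun_upd_same fun_upd_other)
  have "pmf (prod_geom_pmf s \<bind> kmp_bulk_pmf i j) k' = (\<integral>k. pmf (kmp_bulk_pmf i j k) k' \<partial>prod_geom_pmf s)"
    by (rule pmf_bind)
  also have "\<dots> = (\<Sum>k\<in>e ` {0..N}. pmf (kmp_bulk_pmf i j k) k' * pmf (prod_geom_pmf s) k)"
  proof (rule integral_measure_pmf_real)
    fix k assume "pmf (kmp_bulk_pmf i j k) k' \<noteq> 0"
    then have "k i \<le> N" "k = e (k i)"
      unfolding pmf_kmp_bulk_pmf[OF ij] e_def N_def by (auto simp: fun_eq_iff split: if_splits)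
    then show "k \<in> e ` {0..N}" by auto
  qed simp
  also have "\<dots> = (\<Sum>a\<in>{0..N}. pmf (kmp_bulk_pmf i j (e a)) k' * pmf (prod_geom_pmf s) (e a))"
    by (rule sum.reindex[OF \<open>inj_on e {0..N}\<close>, unfolded comp_def])
  also have "\<dots> = (\<Sum>a\<in>{0..N}. 1 / (N + 1) *
      (geom_weight (s i) a * geom_weight (s j) (N - a) * (\<Prod>l\<in>-{i, j}. geom_weight (s l) (k' l))))"
    unfolding pmf_kmp_bulk_pmf[OF ij] pmf_prod_geom_pmf_pair[OF ij s]
    by (intro sum.cong) (auto simp: e_def N_def ij)
  finally show ?thesis
    unfolding N_def by (simp add: sum_distrib_left sum_divide_distrib sum_distrib_right atMost_atLeast0 mult_ac)
qed

lemma pmf_prod_geom_pmf_HO_UNIV: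
  assumes "i \<noteq> j" and s: "\<forall>l. 0 \<le> s l" and "v \<in> {0..1}"
  shows "pmf (prod_geom_pmf (HO UNIV i j v s)) k =
    (let w = v * s i + (1 - v) * s j in (w / (w + 1)) ^ (k i + k j) * (1 / (w + 1)) ^ 2)
      * (\<Prod>l\<in>-{i, j}. geom_weight (s l) (k l))"
proof -
  have "\<forall>l. 0 \<le> HO UNIV i j v s l"
    using HO_nonneg[OF s \<open>v \<in> {0..1}\<close>] by simp
  moreover have "HO UNIV i j v s = s(i := v * s i + (1 - v) * s j, j := v * s i + (1 - v) * s j)"
    unfolding HO_def by (auto simp: fun_eq_iff)
  ultimately show ?thesis
    using assms(1) by (simp add: pmf_prod_geom_pmf_pair geom_weight_mult_same_mean Let_def)
qed

(* HO UNIV i j v s gives both endpoints the interpolated mean: the move of an edge between two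
   internal vertices. *)
lemma measure_pmf_bind_prod_geom_kmp_bulk:
  assumes ij: "i \<noteq> j" and s: "\<forall>l. 0 \<le> s l"
  shows "measure_pmf (prod_geom_pmf s \<bind> kmp_bulk_pmf i j) =
    unit_interval_measure \<bind> (\<lambda>v. measure_pmf (prod_geom_pmf (HO UNIV i j v s)))"
    (is "_ = unit_interval_measure \<bind> ?N")
proof (rule measure_eqI_countable[where A = UNIV])
  have ne: "space unit_interval_measure \<noteq> {}"
    unfolding space_unit_interval_measure by simp
  then show "sets (unit_interval_measure \<bind> ?N) = Pow UNIV"
    by (subst sets_bind[where N = "count_space UNIV"]) auto
  fix k' :: "'a \<Rightarrow> nat"
  define N where "N = k' i + k' j"
  define R where "R = (\<Prod>l\<in>-{i, j}. geom_weight (s l) (k' l))"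
  define W where "W v = v * s i + (1 - v) * s j" for v
  have [measurable]: "W \<in> borel_measurable borel"
    unfolding W_def by measurable
  have "0 \<le> R" unfolding R_def using s by (auto intro!: prod_nonneg geom_weight_nonneg)
  have "emeasure (unit_interval_measure \<bind> ?N) {k'} = (\<integral>\<^sup>+ v. emeasure (?N v) {k'} \<partial>unit_interval_measure)"
    by (rule emeasure_bind[OF ne measurable_prod_geom_pmf_HO]) simp
  also have "\<dots> = (\<integral>\<^sup>+ v. ennreal ((W v / (W v + 1)) ^ N * (1 / (W v + 1)) ^ 2 * R) \<partial>unit_interval_measure)"
    by (intro nn_integral_cong)
      (simp add: emeasure_pmf_single pmf_prod_geom_pmf_HO_UNIV[OF ij s] space_unit_interval_measure
        W_def N_def R_def Let_def)
  also have "\<dots> = ennreal ((\<Sum>m\<le>N. geom_weight (s i) m * geom_weight (s j) (N - m)) / (N + 1) * R)"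
  proof (rule nn_integral_unit_interval_measure)
    show "((\<lambda>v. (W v / (W v + 1)) ^ N * (1 / (W v + 1)) ^ 2 * R)
        has_integral (\<Sum>m\<le>N. geom_weight (s i) m * geom_weight (s j) (N - m)) / (N + 1) * R) {0..1}"
      unfolding W_def using s by (intro has_integral_mult_left[OF has_integral_interpolated_geom]) auto
    show "0 \<le> (W v / (W v + 1)) ^ N * (1 / (W v + 1)) ^ 2 * R" if "v \<in> {0..1}" for v
      using that s \<open>0 \<le> R\<close> unfolding W_def by (auto intro!: add_nonneg_nonneg mult_nonneg_nonneg)
  qed measurable
  also have "\<dots> = emeasure (measure_pmf (prod_geom_pmf s \<bind> kmp_bulk_pmf i j)) {k'}"
    unfolding emeasure_pmf_single pmf_bind_prod_geom_kmp_bulk[OF ij s] N_def R_def by simp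
  finally show "emeasure (measure_pmf (prod_geom_pmf s \<bind> kmp_bulk_pmf i j)) {k'}
      = emeasure (unit_interval_measure \<bind> ?N) {k'}" ..
qed auto

lemma measure_pmf_bind_prod_geom_kmp_boundary:
  assumes "i \<in> V" and "j \<notin> V" and s: "\<forall>l. 0 \<le> s l"
  shows "measure_pmf (prod_geom_pmf s \<bind> kmp_boundary_pmf i j (s j)) =
    unit_interval_measure \<bind> (\<lambda>v. measure_pmf (prod_geom_pmf (HO V i j v s)))"
proof -
  define resample where "resample k = map_pmf (\<lambda>b. k(j := b)) (geom_pmf (s j))" for k
  have "i \<noteq> j" using assms by auto
  have "prod_geom_pmf s \<bind> kmp_boundary_pmf i j (s j) = (prod_geom_pmf s \<bind> kmp_bulk_pmf i j) \<bind> resample"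
    unfolding kmp_boundary_pmf_def resample_def by (simp add: bind_assoc_pmf)
  then have "measure_pmf (prod_geom_pmf s \<bind> kmp_boundary_pmf i j (s j))
      = measure_pmf (prod_geom_pmf s \<bind> kmp_bulk_pmf i j) \<bind> (\<lambda>k. measure_pmf (resample k))"
    by (simp only: measure_pmf_bind[of _ resample])
  also have "\<dots> = (unit_interval_measure \<bind> (\<lambda>v. measure_pmf (prod_geom_pmf (HO UNIV i j v s))))
      \<bind> (\<lambda>k. measure_pmf (resample k))"
    unfolding measure_pmf_bind_prod_geom_kmp_bulk[OF \<open>i \<noteq> j\<close> s] ..
  also have "\<dots> = unit_interval_measure \<bind>
      (\<lambda>v. measure_pmf (prod_geom_pmf (HO UNIV i j v s) \<bind> resample))"
    by (subst bind_assoc[OF measurable_prod_geom_pmf_HO measurable_measure_pmf]) (simp add: measure_pmf_bind)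
  also have "\<dots> = unit_interval_measure \<bind> (\<lambda>v. measure_pmf (prod_geom_pmf (HO V i j v s)))"
  proof -
    have "(HO UNIV i j v s)(j := s j) = HO V i j v s" for v
      using assms unfolding HO_def by (auto simp: fun_eq_iff)
    then show ?thesis
      unfolding resample_def prod_geom_pmf_resample by simp
  qed
  finally show ?thesis .
qed

lemma measure_pmf_bind_prod_geom_kmp_edge:
  assumes "i \<in> V" and "i \<noteq> j" and s: "\<forall>l. 0 \<le> s l" and "\<forall>l. l \<notin> V \<longrightarrow> s l = T l"
  shows "measure_pmf (prod_geom_pmf s \<bind> kmp_edge_pmf V T i j) =
    unit_interval_measure \<bind> (\<lambda>v. measure_pmf (prod_geom_pmf (HO V i j v s)))"
proof (cases "j \<in> V")
  case True
  then have "HO V i j v s = HO UNIV i j v s" for v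
    using assms unfolding HO_def by (auto simp: fun_eq_iff)
  then show ?thesis
    using True measure_pmf_bind_prod_geom_kmp_bulk[OF \<open>i \<noteq> j\<close> s] by (simp add: kmp_edge_pmf_def)
next
  case False
  then show ?thesis
    using assms measure_pmf_bind_prod_geom_kmp_boundary[OF \<open>i \<in> V\<close> False s]
    by (simp add: kmp_edge_pmf_def)
qed

lemma expectation_prod_geom_kmp_edge:
  fixes f :: "('v::finite \<Rightarrow> nat) \<Rightarrow> real"
  assumes f: "\<And>k. \<bar>f k\<bar> \<le> C"
    and edge: "i \<in> V" "i \<noteq> j" "\<forall>l. 0 \<le> s l" "\<forall>l. l \<notin> V \<longrightarrow> s l = T l"
  shows "measure_pmf.expectation (prod_geom_pmf s) (\<lambda>k. measure_pmf.expectation (kmp_edge_pmf V T i j k) f - f k)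
     = (LINT v:{0..1}|lborel. geom_expectation f (HO V i j v s) - geom_expectation f s)"
proof -
  interpret U: prob_space unit_interval_measure
    by (rule prob_space_unit_interval_measure)
  have "integrable unit_interval_measure (\<lambda>v. geom_expectation f (HO V i j v s))"
    by (rule U.integrable_const_bound[where B = C])
       (auto simp: abs_geom_expectation_le[OF f]
         intro: measurable_compose[OF measurable_HO_unit_interval borel_measurable_geom_expectation])
  then have "(LINT v:{0..1}|lborel. geom_expectation f (HO V i j v s) - geom_expectation f s)
      = (\<integral>v. geom_expectation f (HO V i j v s) \<partial>unit_interval_measure) - geom_expectation f s"
    unfolding set_integral_unit_interval_measure by (simp add: U.prob_space)
  also have "(\<integral>v. geom_expectation f (HO V i j v s) \<partial>unit_interval_measure)
      = measure_pmf.expectation (prod_geom_pmf s \<bind> kmp_edge_pmf V T i j) f"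
    unfolding geom_expectation_def measure_pmf_bind_prod_geom_kmp_edge[OF edge]
    by (rule integral_bind[where K = "count_space UNIV" and B = C and B' = 1, symmetric])
       (auto simp: f measurable_prod_geom_pmf_HO)
  also have "\<dots> - geom_expectation f s
      = measure_pmf.expectation (prod_geom_pmf s) (\<lambda>k. measure_pmf.expectation (kmp_edge_pmf V T i j k) f - f k)"
    unfolding expectation_bind_pmf[where f = f, OF f] geom_expectation_def
    by (rule Bochner_Integration.integral_diff[symmetric])
       (auto intro!: integrable_measure_pmf_bounded[of _ C] abs_expectation_pmf_le f)
  finally show ?thesis ..
qed

lemma geom_expectation_LK:
  fixes f :: "('v::finite \<Rightarrow> nat) \<Rightarrow> real"
  assumes f: "\<And>k. \<bar>f k\<bar> \<le> C" and T: "\<forall>j. j \<notin> V \<longrightarrow> 0 < T j"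
    and Eb: "\<forall>(i, j)\<in>Eb. i \<in> V \<and> i \<noteq> j"
    and s: "\<forall>l. 0 \<le> s l" "\<forall>l. l \<notin> V \<longrightarrow> s l = T l"
  shows "geom_expectation (LK V Eb T f) s = LO V Eb (geom_expectation f) s"
proof -
  have "LK V Eb T f = (\<lambda>k. \<Sum>(i, j)\<in>Eb. measure_pmf.expectation (kmp_edge_pmf V T i j k) f - f k)"
    by (rule ext) (rule LK_eq_sum_expectation[where f = f, OF f T])
  then have "geom_expectation (LK V Eb T f) s = (\<Sum>(i, j)\<in>Eb.
      measure_pmf.expectation (prod_geom_pmf s) (\<lambda>k. measure_pmf.expectation (kmp_edge_pmf V T i j k) f - f k))"
    unfolding geom_expectation_def case_prod_beta'
  proof (simp only:, intro Bochner_Integration.integral_sum integrable_measure_pmf_bounded)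
    show "\<bar>measure_pmf.expectation (kmp_edge_pmf V T (fst e) (snd e) k) f - f k\<bar> \<le> 2 * C" for e k
      using abs_expectation_pmf_le[where f = f, OF f, of "kmp_edge_pmf V T (fst e) (snd e) k"] f[of k]
      by linarith
  qed
  also have "\<dots> = LO V Eb (geom_expectation f) s"
    unfolding LO_def using Eb
    by (intro sum.cong refl) (auto intro!: expectation_prod_geom_kmp_edge[where f = f, OF f _ _ s])
  finally show ?thesis .
qed

section \<open>Invariance of the geometric mixture\<close>

lemma muK_eq_bind_prod_geom:
  assumes "prob_space \<nu>" and "sets \<nu> = sets opinion_space" and "AE s in \<nu>. \<forall>i. 0 \<le> s i"
  shows "muK \<nu> = \<nu> \<bind> (\<lambda>s. measure_pmf (prod_geom_pmf s))"
proof (rule measure_eqI_countable[where A = UNIV])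
  have ne: "space \<nu> \<noteq> {}"
    using assms(1) by (rule prob_space.not_empty)
  then show "sets (\<nu> \<bind> (\<lambda>s. measure_pmf (prod_geom_pmf s))) = Pow UNIV"
    by (subst sets_bind[where N = "count_space UNIV"]) auto
  fix k :: "'a \<Rightarrow> nat"
  have "emeasure (muK \<nu>) {k} = (\<integral>\<^sup>+ s. ennreal (\<Prod>i\<in>UNIV. (s i / (s i + 1)) ^ k i * (1 / (s i + 1))) \<partial>\<nu>)"
    unfolding muK_def by (simp add: emeasure_density)
  also have "\<dots> = (\<integral>\<^sup>+ s. emeasure (measure_pmf (prod_geom_pmf s)) {k} \<partial>\<nu>)"
    using assms(3)
    by (intro nn_integral_cong_AE) (auto simp: emeasure_pmf_single pmf_prod_geom_pmf geom_weight_def max_def)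
  also have "\<dots> = emeasure (\<nu> \<bind> (\<lambda>s. measure_pmf (prod_geom_pmf s))) {k}"
    by (rule emeasure_bind[OF ne measurable_prod_geom_pmf[OF assms(2)], symmetric]) simp
  finally show "emeasure (muK \<nu>) {k} = emeasure (\<nu> \<bind> (\<lambda>s. measure_pmf (prod_geom_pmf s))) {k}" .
qed (auto simp: muK_def)

lemma prob_space_muK:
  assumes "prob_space \<nu>" and "sets \<nu> = sets opinion_space" and "AE s in \<nu>. \<forall>i. 0 \<le> s i"
  shows "prob_space (muK \<nu>)"
  unfolding muK_eq_bind_prod_geom[OF assms]
  by (rule prob_space.prob_space_bind[OF assms(1) _ measurable_prod_geom_pmf[OF assms(2)]])
     (simp add: measure_pmf.prob_space_axioms)

lemma integral_muK_LK:
  fixes f :: "('v::finite \<Rightarrow> nat) \<Rightarrow> real"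
  assumes f: "\<And>k. \<bar>f k\<bar> \<le> C" and T: "\<forall>j. j \<notin> V \<longrightarrow> 0 < T j"
    and Eb: "\<forall>(i, j)\<in>Eb. i \<in> V \<and> i \<noteq> j"
    and \<nu>: "prob_space \<nu>" "sets \<nu> = sets opinion_space"
      "AE s in \<nu>. (\<forall>i. 0 \<le> s i) \<and> (\<forall>j. j \<notin> V \<longrightarrow> s j = T j)"
  shows "integrable (muK \<nu>) (LK V Eb T f)"
    and "integral\<^sup>L (muK \<nu>) (LK V Eb T f) = integral\<^sup>L \<nu> (LO V Eb (geom_expectation f))"
proof -
  interpret prob_space \<nu> by (rule \<nu>(1))
  have muK: "muK \<nu> = \<nu> \<bind> (\<lambda>s. measure_pmf (prod_geom_pmf s))"
    using \<nu> by (intro muK_eq_bind_prod_geom) auto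
  have G: "(\<lambda>s. measure_pmf (prod_geom_pmf s)) \<in> \<nu> \<rightarrow>\<^sub>M subprob_algebra (count_space UNIV)"
    by (rule measurable_prod_geom_pmf[OF \<nu>(2)])
  interpret muK: prob_space "muK \<nu>"
    using \<nu> by (intro prob_space_muK) auto
  show "integrable (muK \<nu>) (LK V Eb T f)"
    by (rule muK.integrable_const_bound[where B = "real (card Eb) * (2 * C)"])
       (auto simp: abs_LK_le[where f = f, OF f T] muK_def)
  have "integral\<^sup>L (muK \<nu>) (LK V Eb T f) = (\<integral>s. geom_expectation (LK V Eb T f) s \<partial>\<nu>)"
    unfolding muK geom_expectation_def
    by (rule integral_bind[where K = "count_space UNIV" and B = "real (card Eb) * (2 * C)" and B' = 1])
       (auto simp: abs_LK_le[where f = f, OF f T] G)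
  also have "\<dots> = integral\<^sup>L \<nu> (LO V Eb (geom_expectation f))"
    using \<nu>(3) by (intro integral_cong_AE)
      (auto simp: geom_expectation_LK[where f = f, OF f T Eb] measurable_cong_sets[OF \<nu>(2) refl]
        borel_measurable_LO borel_measurable_geom_expectation)
  finally show "integral\<^sup>L (muK \<nu>) (LK V Eb T f) = integral\<^sup>L \<nu> (LO V Eb (geom_expectation f))" .
qed

theorem theorem5p1:
  fixes V :: "'v::finite set" and Eb :: "('v \<times> 'v) set" and T :: "'v \<Rightarrow> real"
    and \<nu> :: "('v \<Rightarrow> real) measure"
  assumes "\<forall>(i, j)\<in>Eb. i \<in> V \<and> i \<noteq> j"
    and "\<forall>(i, j)\<in>Eb. (j, i) \<notin> Eb"
    and "\<forall>j. j \<notin> V \<longrightarrow> T j > 0"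
    and "opinion_invariant V Eb T \<nu>"
  shows "prob_space (muK \<nu>) \<and> kmp_invariant V Eb T (muK \<nu>)"
proof -
  have \<nu>: "prob_space \<nu>" "sets \<nu> = sets opinion_space"
      "AE s in \<nu>. (\<forall>i. 0 \<le> s i) \<and> (\<forall>j. j \<notin> V \<longrightarrow> s j = T j)"
    and LO_zero: "\<And>g C. g \<in> borel_measurable opinion_space \<Longrightarrow> \<forall>x. \<bar>g x\<bar> \<le> C \<Longrightarrow>
      integral\<^sup>L \<nu> (LO V Eb g) = 0"
    using assms(4) unfolding opinion_invariant_def by blast+
  have "prob_space (muK \<nu>)"
    using \<nu> by (intro prob_space_muK) auto
  moreover have "integrable (muK \<nu>) (LK V Eb T f) \<and> integral\<^sup>L (muK \<nu>) (LK V Eb T f) = 0"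
    if f: "\<forall>k. \<bar>f k\<bar> \<le> C" for f :: "('v \<Rightarrow> nat) \<Rightarrow> real" and C
  proof -
    have "integral\<^sup>L \<nu> (LO V Eb (geom_expectation f)) = 0"
      using f by (intro LO_zero borel_measurable_geom_expectation) (auto intro: abs_geom_expectation_le)
    then show ?thesis
      using integral_muK_LK[of f C, OF _ assms(3,1) \<nu>] f by auto
  qed
  ultimately show ?thesis
    unfolding kmp_invariant_def by blast
qed

end
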